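(* Let $G$ be a locally compact topological group, let $(X,G)$ be a minimal continuous action on a compact metrizable space, and let $(Y,G)$ be a factor of $(X,G)$ through a proximal factor map $\phi\colon X\to Y$. Then $$r_c(Y,G)\leq r_c(X,G)\leq r_m(Y,G).$$
   Context: A continuous action $(X,G)$ is a continuous map $G\times X\to X$, $(g,x)\mapsto gx$, with $g(hx)=(gh)x$ and $ex=x$; here $X$ is a compact metrizable space with compatible metric $d$. $(X,G)$ is minimal if every orbit $Gx$ is dense in $X$. A factor map $\phi\colon X\to Y$ between continuous actions is a continuous surjection with $\phi(gx)=g\phi(x)$ for all $g,x$. A pair $(x_1,x_2)\in X^2$ is proximal if for every $\varepsilon>0$ there is $g\in G$ with $d(gx_1,gx_2)<\varepsilon$; $P(X,G)$ denotes the set of proximal pairs. A factor map $\phi$ is proximal if $\phi(x)=\phi(y)$ implies $(x,y)\in P(X,G)$. An action is equicontinuous if for every $\varepsilon>0$ there is $\delta>0$ such that $d(x,y)<\delta$ implies $d(gx,gy)<\varepsilon$ for all $g\in G$. The maximal equicontinuous factor $(X_{eq},G)$, with factor map $\pi_{eq}\colon X\to X_{eq}$, is the (unique up to conjugacy) equicontinuous factor of $(X,G)$ of which every equicontinuous factor of $(X,G)$ is a factor. The minimal rank is $r_m(X,G)=\inf\{|\pi_{eq}^{-1}(y)|: y\in X_{eq}\}$ (cardinalities, possibly infinite). The coincidence rank: for $y\in X_{eq}$ let $r_c(X,G;y)=\sup\{n\in\mathbb{N}:\exists x_1,\dots,x_n\in\pi_{eq}^{-1}(y)$ with $(x_i,x_j)\notin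 P(X,G)$ for all $i\neq j\}$; for minimal actions this value does not depend on $y$, and $r_c(X,G)$ denotes this common value. *)

theory Defs
  imports "HOL-Analysis.Analysis" "HOL-Library.Extended_Nat"
begin

text \<open>A compact metrizable space is represented as a compact subset X of a
metric-space type; the group G is a type of class topological_group_add
(group operation written +, not assumed commutative).\<close>

definition continuous_action ::
  "('g::topological_group_add \<Rightarrow> 'x::metric_space \<Rightarrow> 'x) \<Rightarrow> 'x set \<Rightarrow> bool" where
  "continuous_action act X \<longleftrightarrow>
     compact X \<and>
     (\<forall>g. \<forall>x\<in>X. act g x \<in> X) \<and>
     continuous_on (UNIV \<times> X) (\<lambda>(g, x). act g x) \<and>
     (\<forall>g h. \<forall>x\<in>X. act g (act h x) = act (g + h) x) \<and>
     (\<forall>x\<in>X. act 0 x = x)"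

definition minimal_action ::
  "('g::topological_group_add \<Rightarrow> 'x::metric_space \<Rightarrow> 'x) \<Rightarrow> 'x set \<Rightarrow> bool" where
  "minimal_action act X \<longleftrightarrow> (\<forall>x\<in>X. X \<subseteq> closure (range (\<lambda>g. act g x)))"

definition factor_map ::
  "('g::topological_group_add \<Rightarrow> 'x::metric_space \<Rightarrow> 'x) \<Rightarrow> 'x set \<Rightarrow>
   ('g \<Rightarrow> 'y::metric_space \<Rightarrow> 'y) \<Rightarrow> 'y set \<Rightarrow> ('x \<Rightarrow> 'y) \<Rightarrow> bool" where
  "factor_map actX X actY Y \<phi> \<longleftrightarrow>
     continuous_on X \<phi> \<and> \<phi> ` X = Y \<and> (\<forall>g. \<forall>x\<in>X. \<phi> (actX g x) = actY g (\<phi> x))"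

definition proximal_pairs ::
  "('g::topological_group_add \<Rightarrow> 'x::metric_space \<Rightarrow> 'x) \<Rightarrow> 'x set \<Rightarrow> ('x \<times> 'x) set" where
  "proximal_pairs act X =
     {(x1, x2). x1 \<in> X \<and> x2 \<in> X \<and> (\<forall>\<epsilon>>0. \<exists>g. dist (act g x1) (act g x2) < \<epsilon>)}"

definition proximal_factor_map ::
  "('g::topological_group_add \<Rightarrow> 'x::metric_space \<Rightarrow> 'x) \<Rightarrow> 'x set \<Rightarrow>
   ('g \<Rightarrow> 'y::metric_space \<Rightarrow> 'y) \<Rightarrow> 'y set \<Rightarrow> ('x \<Rightarrow> 'y) \<Rightarrow> bool" where
  "proximal_factor_map actX X actY Y \<phi> \<longleftrightarrow>
     factor_map actX X actY Y \<phi> \<and>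
     (\<forall>x\<in>X. \<forall>y\<in>X. \<phi> x = \<phi> y \<longrightarrow> (x, y) \<in> proximal_pairs actX X)"

definition equicontinuous_action ::
  "('g::topological_group_add \<Rightarrow> 'x::metric_space \<Rightarrow> 'x) \<Rightarrow> 'x set \<Rightarrow> bool" where
  "equicontinuous_action act X \<longleftrightarrow>
     (\<forall>\<epsilon>>0. \<exists>\<delta>>0. \<forall>x\<in>X. \<forall>y\<in>X. dist x y < \<delta> \<longrightarrow> (\<forall>g. dist (act g x) (act g y) < \<epsilon>))"

text \<open>Every compact
metrizable space is homeomorphic to a compact subset of the Hilbert-cube-like
space nat => real (product topology, Function_Metric), so "every equicontinuous
factor" is expressed by quantifying over equicontinuous factors whose phase space
is a compact subset of nat => real.\<close>

definition max_equicontinuous_factor ::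
  "('g::topological_group_add \<Rightarrow> 'x::metric_space \<Rightarrow> 'x) \<Rightarrow> 'x set \<Rightarrow>
   ('g \<Rightarrow> 'e::metric_space \<Rightarrow> 'e) \<Rightarrow> 'e set \<Rightarrow> ('x \<Rightarrow> 'e) \<Rightarrow> bool" where
  "max_equicontinuous_factor act X actE E \<pi> \<longleftrightarrow>
     continuous_action actE E \<and> equicontinuous_action actE E \<and>
     factor_map act X actE E \<pi> \<and>
     (\<forall>(actZ :: 'g \<Rightarrow> (nat \<Rightarrow> real) \<Rightarrow> (nat \<Rightarrow> real)) Z \<psi>.
        continuous_action actZ Z \<and> equicontinuous_action actZ Z \<and> factor_map act X actZ Z \<psi>
        \<longrightarrow> (\<exists>\<theta>. factor_map actE E actZ Z \<theta> \<and> (\<forall>x\<in>X. \<psi> x = \<theta> (\<pi> x))))"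

definition ecard :: "'a set \<Rightarrow> enat" where
  "ecard A = (if finite A then enat (card A) else \<infinity>)"

definition minimal_rank :: "'x set \<Rightarrow> 'e set \<Rightarrow> ('x \<Rightarrow> 'e) \<Rightarrow> enat" where
  "minimal_rank X E \<pi> = (INF y\<in>E. ecard {x\<in>X. \<pi> x = y})"

definition coincidence_rank_at ::
  "('g::topological_group_add \<Rightarrow> 'x::metric_space \<Rightarrow> 'x) \<Rightarrow> 'x set \<Rightarrow> ('x \<Rightarrow> 'e) \<Rightarrow> 'e \<Rightarrow> enat" where
  "coincidence_rank_at act X \<pi> y =
     Sup {enat n | n. \<exists>xs :: nat \<Rightarrow> 'x.
            (\<forall>i<n. xs i \<in> X \<and> \<pi> (xs i) = y) \<and>
            (\<forall>i<n. \<forall>j<n. i \<noteq> j \<longrightarrow> (xs i, xs j) \<notin> proximal_pairs act X)}"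

end

theory Submission
  imports Defs
begin

text \<open>Equicontinuous systems have no nontrivial proximal pairs, so every equicontinuous
factor of X collapses the fibres of the proximal map \<phi> and hence factors through Y:
the maximal equicontinuous factors of X and Y have the same fibres in X. By minimality,
orbit limits carry a tuple lying in one fibre into any other fibre, and non-proximality
survives such limits. Lifting a pairwise non-proximal tuple of Y to X gives
r_c(Y) \<le> r_c(X); moving a pairwise non-proximal tuple of X into a fibre over Y_eq gives
points with distinct images under \<phi>, since \<phi> identifies only proximal points, hence
r_c(X) \<le> r_m(Y).\<close>

lemma continuous_on_action:
  fixes act :: "'g::topological_group_add \<Rightarrow> 'x::metric_space \<Rightarrow> 'x"
  assumes "continuous_action act X"
  shows "continuous_on X (act g)"
proof -
  have c: "continuous_on (UNIV \<times> X) (\<lambda>(g, x). act g x)"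
    using assms unfolding continuous_action_def by auto
  have "continuous_on X ((\<lambda>(g, x). act g x) \<circ> (\<lambda>x. (g, x)))"
    by (rule continuous_on_compose[OF _ continuous_on_subset[OF c]]) (auto intro: continuous_intros)
  then show ?thesis
    by (simp add: o_def)
qed

lemma factor_map_compose:
  assumes "factor_map act1 X1 act2 X2 f" and "factor_map act2 X2 act3 X3 g"
  shows "factor_map act1 X1 act3 X3 (g \<circ> f)"
proof -
  have "continuous_on X1 (g \<circ> f)"
    using assms continuous_on_compose unfolding factor_map_def by metis
  with assms show ?thesis
    unfolding factor_map_def by (auto simp: image_comp[symmetric])
qed

lemma continuous_on_through_compact_surjection:
  fixes f :: "'a::metric_space \<Rightarrow> 'b::metric_space" and g :: "'b \<Rightarrow> 'c::metric_space"
  assumes f: "continuous_on S f" and S: "compact S" and T: "f ` S = T"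
    and gf: "continuous_on S (g \<circ> f)"
  shows "continuous_on T g"
proof -
  have "quotient_map (top_of_set S) (top_of_set T) f"
  proof (rule continuous_imp_quotient_map)
    show "continuous_map (top_of_set S) (top_of_set T) f"
      using f T by (simp add: image_subset_iff_funcset[symmetric])
    show "compact_space (top_of_set S)"
      using S by (simp add: compact_space_subtopology)
    show "Hausdorff_space (top_of_set T)"
      by (rule Hausdorff_space_subtopology[OF Hausdorff_space_euclidean])
  qed (use T in simp)
  moreover have "continuous_map (top_of_set S) euclidean (g \<circ> f)"
    using gf by simp
  ultimately show ?thesis
    using continuous_compose_quotient_map[of "top_of_set S" "top_of_set T" f euclidean g] by simp
qed

lemma compact_embedding_nat_real:
  fixes W :: "'w::metric_space set"
  assumes "compact W"
  obtains e :: "'w \<Rightarrow> nat \<Rightarrow> real" where "continuous_on W e" and "inj_on e W"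
proof (cases "W = {}")
  case True
  then show ?thesis
    using that[of "\<lambda>_ _. 0"] by auto
next
  case False
  have "\<exists>K. finite K \<and> W \<subseteq> (\<Union>c\<in>K. ball c (1 / Suc k))" for k :: nat
  proof -
    have "W \<subseteq> (\<Union>c\<in>W. ball c (1 / Suc k))"
      by auto
    then show ?thesis
      using compactE_image[OF assms] by (metis open_ball)
  qed
  then obtain K where K: "\<And>k. finite (K k)"
    and net: "\<And>k. W \<subseteq> (\<Union>c\<in>K k. ball c (1 / Suc k))"
    by metis
  define D where "D = (\<Union>k. K k)"
  have "D \<noteq> {}"
    using False net[of 0] unfolding D_def by blast
  moreover have "countable D"
    unfolding D_def using K(1) by (simp add: countable_finite)
  ultimately have d: "range (from_nat_into D) = D"
    by simp
  define e where "e = (\<lambda>w n. dist w (from_nat_into D n))"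
  show ?thesis
  proof
    show "continuous_on W e"
      unfolding e_def by (intro continuous_on_coordinatewise_then_product continuous_intros)
    show "inj_on e W"
    proof (rule inj_onI)
      fix w w' assume w: "w \<in> W" "w' \<in> W" and eq: "e w = e w'"
      have close: "dist w w' < 2 / Suc k" for k
      proof -
        obtain c where c: "c \<in> K k" "dist c w < 1 / Suc k"
          using net[of k] w(1) by auto
        then obtain n where "from_nat_into D n = c"
          using d unfolding D_def by (metis UNIV_I UN_I imageE)
        then have "dist w' c = dist w c"
          using eq unfolding e_def by (metis fun_cong)
        then have "dist w w' \<le> 2 * dist c w"
          using dist_triangle2[of w w' c] by (simp add: dist_commute)
        with c(2) show ?thesis
          by simp
      qed
      show "w = w'"
      proof (rule ccontr)
        assume "w \<noteq> w'"
        then obtain k where "inverse (real (Suc k)) < dist w w' / 2"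
          using reals_Archimedean[of "dist w w' / 2"] by auto
        with close[of k] show False
          by (simp add: field_simps)
      qed
    qed
  qed
qed

definition conjugate_action ::
  "('w \<Rightarrow> 'z) \<Rightarrow> 'w set \<Rightarrow> ('g \<Rightarrow> 'w \<Rightarrow> 'w) \<Rightarrow> 'g \<Rightarrow> 'z \<Rightarrow> 'z" where
  "conjugate_action e W act g z = e (act g (inv_into W e z))"

lemma continuous_action_conjugate:
  fixes act :: "'g::topological_group_add \<Rightarrow> 'w::metric_space \<Rightarrow> 'w"
    and e :: "'w \<Rightarrow> 'z::metric_space"
  assumes act: "continuous_action act W" and e: "continuous_on W e" "inj_on e W"
  shows "continuous_action (conjugate_action e W act) (e ` W)"
proof -
  have W: "compact W" "\<forall>g. \<forall>x\<in>W. act g x \<in> W"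
    and cont: "continuous_on (UNIV \<times> W) (\<lambda>(g, x). act g x)"
    and law: "\<forall>g h. \<forall>x\<in>W. act g (act h x) = act (g + h) x" "\<forall>x\<in>W. act 0 x = x"
    using act unfolding continuous_action_def by auto
  have inv: "continuous_on (e ` W) (inv_into W e)"
    using continuous_on_inv[OF e(1) W(1)] e(2) by simp
  have "continuous_on (UNIV \<times> e ` W) (e \<circ> (\<lambda>(g, x). act g x) \<circ> (\<lambda>(g, z). (g, inv_into W e z)))"
  proof (intro continuous_on_compose)
    show "continuous_on (UNIV \<times> e ` W) (\<lambda>(g, z). (g, inv_into W e z))"
      unfolding case_prod_unfold
      by (intro continuous_intros continuous_on_compose2[OF inv]) auto
    show "continuous_on ((\<lambda>(g, z). (g, inv_into W e z)) ` (UNIV \<times> e ` W)) (\<lambda>(g, x). act g x)"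
      by (rule continuous_on_subset[OF cont]) (auto simp: e(2))
    show "continuous_on ((\<lambda>(g, x). act g x) ` (\<lambda>(g, z). (g, inv_into W e z)) ` (UNIV \<times> e ` W)) e"
      by (rule continuous_on_subset[OF e(1)]) (use W(2) e(2) in auto)
  qed
  then show ?thesis
    using W law e(2) compact_continuous_image[OF e(1) W(1)]
    unfolding continuous_action_def conjugate_action_def
    by (auto simp: o_def case_prod_unfold)
qed

lemma equicontinuous_action_conjugate:
  fixes act :: "'g::topological_group_add \<Rightarrow> 'w::metric_space \<Rightarrow> 'w"
    and e :: "'w \<Rightarrow> 'z::metric_space"
  assumes act: "continuous_action act W" "equicontinuous_action act W"
    and e: "continuous_on W e" "inj_on e W"
  shows "equicontinuous_action (conjugate_action e W act) (e ` W)"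
  unfolding equicontinuous_action_def
proof (intro allI impI)
  fix \<epsilon> :: real assume "\<epsilon> > 0"
  have W: "compact W" "\<forall>g. \<forall>x\<in>W. act g x \<in> W"
    using act(1) unfolding continuous_action_def by auto
  have inv: "continuous_on (e ` W) (inv_into W e)"
    using continuous_on_inv[OF e(1) W(1)] e(2) by simp
  obtain d1 where d1: "d1 > 0" "\<And>a b. a \<in> W \<Longrightarrow> b \<in> W \<Longrightarrow> dist a b < d1 \<Longrightarrow> dist (e a) (e b) < \<epsilon>"
    using compact_uniformly_continuous[OF e(1) W(1)] \<open>\<epsilon> > 0\<close>
    unfolding uniformly_continuous_on_def by (metis dist_commute)
  obtain d2 where d2: "d2 > 0"
    "\<And>a b g. a \<in> W \<Longrightarrow> b \<in> W \<Longrightarrow> dist a b < d2 \<Longrightarrow> dist (act g a) (act g b) < d1"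
    using act(2) d1(1) unfolding equicontinuous_action_def by metis
  obtain d3 where d3: "d3 > 0" "\<And>a b. a \<in> e ` W \<Longrightarrow> b \<in> e ` W \<Longrightarrow> dist a b < d3 \<Longrightarrow>
      dist (inv_into W e a) (inv_into W e b) < d2"
    using compact_uniformly_continuous[OF inv compact_continuous_image[OF e(1) W(1)]] d2(1)
    unfolding uniformly_continuous_on_def by (metis dist_commute)
  show "\<exists>\<delta>>0. \<forall>a\<in>e ` W. \<forall>b\<in>e ` W. dist a b < \<delta> \<longrightarrow>
      (\<forall>g. dist (conjugate_action e W act g a) (conjugate_action e W act g b) < \<epsilon>)"
    unfolding conjugate_action_def
    using d3 d2(2) d1(2) W(2) inv_into_into[of _ e W] by (metis (no_types, lifting))
qed

lemma factor_map_conjugate: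
  assumes "factor_map actX X act W \<psi>" and e: "continuous_on W e" "inj_on e W"
  shows "factor_map actX X (conjugate_action e W act) (e ` W) (e \<circ> \<psi>)"
proof -
  have "continuous_on X (e \<circ> \<psi>)"
    using assms continuous_on_compose unfolding factor_map_def by metis
  with assms show ?thesis
    unfolding factor_map_def conjugate_action_def by (auto simp: image_comp[symmetric])
qed

text \<open>Maximality is only required against factors with phase space in nat \<Rightarrow> real;
an arbitrary compact factor is first conjugated into that space.\<close>

lemma max_equicontinuous_factor_refines:
  fixes act :: "'g::topological_group_add \<Rightarrow> 'x::metric_space \<Rightarrow> 'x"
    and actW :: "'g \<Rightarrow> 'w::metric_space \<Rightarrow> 'w"
  assumes max: "max_equicontinuous_factor act X actE E \<pi>"
    and W: "continuous_action actW W" "equicontinuous_action actW W"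
    and \<psi>: "factor_map act X actW W \<psi>"
    and x: "x \<in> X" "x' \<in> X" "\<pi> x = \<pi> x'"
  shows "\<psi> x = \<psi> x'"
proof -
  obtain e :: "'w \<Rightarrow> nat \<Rightarrow> real" where e: "continuous_on W e" "inj_on e W"
    using compact_embedding_nat_real W(1) unfolding continuous_action_def by blast
  obtain \<theta> where "\<forall>x\<in>X. (e \<circ> \<psi>) x = \<theta> (\<pi> x)"
    using max continuous_action_conjugate[OF W(1) e] equicontinuous_action_conjugate[OF W e]
      factor_map_conjugate[OF \<psi> e]
    unfolding max_equicontinuous_factor_def by blast
  then have "e (\<psi> x) = e (\<psi> x')"
    using x by auto
  then show ?thesis
    using e(2) \<psi> x(1,2) unfolding factor_map_def by (auto dest: inj_onD)
qed

lemma factor_map_proximal_pairs: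
  fixes act :: "'g::topological_group_add \<Rightarrow> 'x::metric_space \<Rightarrow> 'x"
    and actE :: "'g \<Rightarrow> 'e::metric_space \<Rightarrow> 'e"
  assumes X: "continuous_action act X" and \<pi>: "factor_map act X actE E \<pi>"
    and p: "(x, x') \<in> proximal_pairs act X"
  shows "(\<pi> x, \<pi> x') \<in> proximal_pairs actE E"
proof -
  have X': "compact X" "\<forall>g. \<forall>x\<in>X. act g x \<in> X"
    using X unfolding continuous_action_def by auto
  have \<pi>': "continuous_on X \<pi>" "\<pi> ` X = E" "\<forall>g. \<forall>x\<in>X. \<pi> (act g x) = actE g (\<pi> x)"
    using \<pi> unfolding factor_map_def by auto
  have x: "x \<in> X" "x' \<in> X" and close: "\<forall>\<epsilon>>0. \<exists>g. dist (act g x) (act g x') < \<epsilon>"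
    using p unfolding proximal_pairs_def by auto
  have "\<exists>g. dist (actE g (\<pi> x)) (actE g (\<pi> x')) < \<epsilon>" if "\<epsilon> > 0" for \<epsilon> :: real
  proof -
    obtain d where d: "d > 0" "\<And>a b. a \<in> X \<Longrightarrow> b \<in> X \<Longrightarrow> dist a b < d \<Longrightarrow> dist (\<pi> a) (\<pi> b) < \<epsilon>"
      using compact_uniformly_continuous[OF \<pi>'(1) X'(1)] \<open>\<epsilon> > 0\<close>
      unfolding uniformly_continuous_on_def by (metis dist_commute)
    obtain g where "dist (act g x) (act g x') < d"
      using close d(1) by blast
    then have "dist (\<pi> (act g x)) (\<pi> (act g x')) < \<epsilon>"
      using d(2) X'(2) x by blast
    then show ?thesis
      using \<pi>'(3) x by auto
  qed
  then show ?thesis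
    using x \<pi>'(2) unfolding proximal_pairs_def by auto
qed

lemma equicontinuous_proximal_pairs_eq:
  fixes act :: "'g::topological_group_add \<Rightarrow> 'e::metric_space \<Rightarrow> 'e"
  assumes E: "continuous_action act E" "equicontinuous_action act E"
    and p: "(a, b) \<in> proximal_pairs act E"
  shows "a = b"
proof (rule ccontr)
  assume "a \<noteq> b"
  have E': "\<forall>g. \<forall>x\<in>E. act g x \<in> E" "\<forall>g h. \<forall>x\<in>E. act g (act h x) = act (g + h) x"
    "\<forall>x\<in>E. act 0 x = x"
    using E(1) unfolding continuous_action_def by auto
  have ab: "a \<in> E" "b \<in> E" and close: "\<forall>\<epsilon>>0. \<exists>g. dist (act g a) (act g b) < \<epsilon>"
    using p unfolding proximal_pairs_def by auto
  obtain d where d: "d > 0"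
    "\<And>x y g. x \<in> E \<Longrightarrow> y \<in> E \<Longrightarrow> dist x y < d \<Longrightarrow> dist (act g x) (act g y) < dist a b"
    using E(2) \<open>a \<noteq> b\<close> zero_less_dist_iff[of a b] unfolding equicontinuous_action_def by blast
  obtain g where "dist (act g a) (act g b) < d"
    using close d(1) by blast
  \<comment> \<open>translating back by -g contradicts equicontinuity at scale dist a b\<close>
  then have "dist (act (-g) (act g a)) (act (-g) (act g b)) < dist a b"
    using d(2) E'(1) ab by blast
  then show False
    using E'(2,3) ab by simp
qed

lemma factor_map_through_fibres:
  fixes actX :: "'g::topological_group_add \<Rightarrow> 'x::metric_space \<Rightarrow> 'x"
    and actY :: "'g \<Rightarrow> 'y::metric_space \<Rightarrow> 'y"
    and actE :: "'g \<Rightarrow> 'e::metric_space \<Rightarrow> 'e"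
  assumes X: "continuous_action actX X"
    and \<phi>: "factor_map actX X actY Y \<phi>" and \<pi>: "factor_map actX X actE E \<pi>"
    and fibres: "\<And>x x'. x \<in> X \<Longrightarrow> x' \<in> X \<Longrightarrow> \<phi> x = \<phi> x' \<Longrightarrow> \<pi> x = \<pi> x'"
  obtains \<psi> where "factor_map actY Y actE E \<psi>" and "\<And>x. x \<in> X \<Longrightarrow> \<psi> (\<phi> x) = \<pi> x"
proof -
  have X': "compact X" "\<forall>g. \<forall>x\<in>X. actX g x \<in> X"
    using X unfolding continuous_action_def by auto
  have \<phi>': "continuous_on X \<phi>" "\<phi> ` X = Y" "\<forall>g. \<forall>x\<in>X. \<phi> (actX g x) = actY g (\<phi> x)"
    using \<phi> unfolding factor_map_def by auto
  have \<pi>': "continuous_on X \<pi>" "\<pi> ` X = E" "\<forall>g. \<forall>x\<in>X. \<pi> (actX g x) = actE g (\<pi> x)"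
    using \<pi> unfolding factor_map_def by auto
  define \<psi> where "\<psi> = \<pi> \<circ> inv_into X \<phi>"
  have \<psi>\<phi>: "\<psi> (\<phi> x) = \<pi> x" if "x \<in> X" for x
  proof -
    have "inv_into X \<phi> (\<phi> x) \<in> X" "\<phi> (inv_into X \<phi> (\<phi> x)) = \<phi> x"
      using that by (auto intro: inv_into_into f_inv_into_f)
    then show ?thesis
      unfolding \<psi>_def using fibres[OF _ that] by simp
  qed
  have "factor_map actY Y actE E \<psi>"
    unfolding factor_map_def
  proof (intro conjI ballI allI)
    have "continuous_on X (\<psi> \<circ> \<phi>)"
      using \<pi>'(1) by (rule continuous_on_eq) (simp add: \<psi>\<phi>)
    then show "continuous_on Y \<psi>"
      using continuous_on_through_compact_surjection[OF \<phi>'(1) X'(1) \<phi>'(2)] by blast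
    have "\<psi> ` Y = \<psi> ` \<phi> ` X"
      using \<phi>'(2) by simp
    also have "\<dots> = \<pi> ` X"
      unfolding image_image using \<psi>\<phi> by (intro image_cong) auto
    finally show "\<psi> ` Y = E"
      using \<pi>'(2) by simp
    fix g y assume "y \<in> Y"
    then obtain x where x: "x \<in> X" "y = \<phi> x"
      using \<phi>'(2) by blast
    have "\<psi> (actY g y) = \<psi> (\<phi> (actX g x))"
      using \<phi>'(3) x by simp
    also have "\<dots> = \<pi> (actX g x)"
      using \<psi>\<phi> X'(2) x(1) by simp
    also have "\<dots> = actE g (\<psi> y)"
      using \<pi>'(3) \<psi>\<phi> x by simp
    finally show "\<psi> (actY g y) = actE g (\<psi> y)" .
  qed
  then show ?thesis
    using \<psi>\<phi> by (rule that)
qed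

lemma proximal_factor_map_factors_equicontinuous:
  fixes actX :: "'g::topological_group_add \<Rightarrow> 'x::metric_space \<Rightarrow> 'x"
    and actY :: "'g \<Rightarrow> 'y::metric_space \<Rightarrow> 'y"
    and actE :: "'g \<Rightarrow> 'e::metric_space \<Rightarrow> 'e"
  assumes X: "continuous_action actX X"
    and \<phi>: "proximal_factor_map actX X actY Y \<phi>"
    and E: "continuous_action actE E" "equicontinuous_action actE E"
    and \<pi>: "factor_map actX X actE E \<pi>"
  obtains \<psi> where "factor_map actY Y actE E \<psi>" and "\<And>x. x \<in> X \<Longrightarrow> \<psi> (\<phi> x) = \<pi> x"
proof (rule factor_map_through_fibres[OF X _ \<pi>])
  show "factor_map actX X actY Y \<phi>"
    using \<phi> unfolding proximal_factor_map_def by blast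
  fix x x' assume "x \<in> X" "x' \<in> X" "\<phi> x = \<phi> x'"
  then have "(x, x') \<in> proximal_pairs actX X"
    using \<phi> unfolding proximal_factor_map_def by simp
  then show "\<pi> x = \<pi> x'"
    by (rule equicontinuous_proximal_pairs_eq[OF E factor_map_proximal_pairs[OF X \<pi>]])
qed (rule that)

lemma proximal_factor_max_equicontinuous_fibres:
  fixes actX :: "'g::topological_group_add \<Rightarrow> 'x::metric_space \<Rightarrow> 'x"
    and actY :: "'g \<Rightarrow> 'y::metric_space \<Rightarrow> 'y"
    and actEX :: "'g \<Rightarrow> 'ex::metric_space \<Rightarrow> 'ex"
    and actEY :: "'g \<Rightarrow> 'ey::metric_space \<Rightarrow> 'ey"
  assumes X: "continuous_action actX X"
    and \<phi>: "proximal_factor_map actX X actY Y \<phi>"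
    and maxX: "max_equicontinuous_factor actX X actEX Xeq \<pi>X"
    and maxY: "max_equicontinuous_factor actY Y actEY Yeq \<pi>Y"
    and x: "x \<in> X" "x' \<in> X"
  shows "\<pi>X x = \<pi>X x' \<longleftrightarrow> \<pi>Y (\<phi> x) = \<pi>Y (\<phi> x')"
proof
  have EY: "continuous_action actEY Yeq" "equicontinuous_action actEY Yeq"
    and \<pi>Y: "factor_map actY Y actEY Yeq \<pi>Y"
    using maxY unfolding max_equicontinuous_factor_def by auto
  have "factor_map actX X actEY Yeq (\<pi>Y \<circ> \<phi>)"
    using factor_map_compose[OF _ \<pi>Y] \<phi> unfolding proximal_factor_map_def by blast
  from max_equicontinuous_factor_refines[OF maxX EY this x]
  show "\<pi>Y (\<phi> x) = \<pi>Y (\<phi> x')" if "\<pi>X x = \<pi>X x'"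
    using that by simp
next
  have EX: "continuous_action actEX Xeq" "equicontinuous_action actEX Xeq"
    and \<pi>X: "factor_map actX X actEX Xeq \<pi>X"
    using maxX unfolding max_equicontinuous_factor_def by auto
  obtain \<psi> where \<psi>: "factor_map actY Y actEX Xeq \<psi>" and \<psi>\<phi>: "\<And>x. x \<in> X \<Longrightarrow> \<psi> (\<phi> x) = \<pi>X x"
    using proximal_factor_map_factors_equicontinuous[OF X \<phi> EX \<pi>X] by blast
  have "\<phi> x \<in> Y" "\<phi> x' \<in> Y"
    using \<phi> x unfolding proximal_factor_map_def factor_map_def by auto
  then show "\<pi>X x = \<pi>X x'" if "\<pi>Y (\<phi> x) = \<pi>Y (\<phi> x')"
    using max_equicontinuous_factor_refines[OF maxY EX \<psi> _ _ that] \<psi>\<phi> x by simp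
qed

lemma seq_compact_common_subseq:
  fixes f :: "nat \<Rightarrow> nat \<Rightarrow> 'a::topological_space"
  assumes X: "seq_compact X" and f: "\<And>i k. i < n \<Longrightarrow> f i k \<in> X"
  obtains r l where "strict_mono r" and "\<And>i. i < n \<Longrightarrow> l i \<in> X \<and> (f i \<circ> r) \<longlonglongrightarrow> l i"
proof -
  have "\<exists>r l. strict_mono r \<and> (\<forall>i<m. l i \<in> X \<and> (f i \<circ> r) \<longlonglongrightarrow> l i)" if "m \<le> n" for m
    using that
  proof (induction m)
    case 0
    show ?case
      using strict_mono_id by blast
  next
    case (Suc m)
    have "m \<le> n"
      using Suc.prems by simp
    then obtain r l where r: "strict_mono r" and l: "\<forall>i<m. l i \<in> X \<and> (f i \<circ> r) \<longlonglongrightarrow> l i"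
      using Suc.IH by blast
    have "\<forall>k. (f m \<circ> r) k \<in> X"
      using f Suc.prems by simp
    then obtain a r' where a: "a \<in> X" "strict_mono r'" "(f m \<circ> r \<circ> r') \<longlonglongrightarrow> a"
      using seq_compactE[OF X] by metis
    have "(l(m := a)) i \<in> X \<and> (f i \<circ> (r \<circ> r')) \<longlonglongrightarrow> (l(m := a)) i" if "i < Suc m" for i
    proof (cases "i = m")
      case True
      then show ?thesis
        using a(1,3) by (simp add: o_assoc)
    next
      case False
      then have "l i \<in> X" "(f i \<circ> r) \<longlonglongrightarrow> l i"
        using l that by auto
      then show ?thesis
        using False LIMSEQ_subseq_LIMSEQ[OF _ a(2)] by (simp add: o_assoc)
    qed
    then show ?case
      using strict_mono_o[OF r a(2)] by blast
  qed
  then show ?thesis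
    using that by blast
qed

lemma not_proximal_orbit_limit:
  fixes act :: "'g::topological_group_add \<Rightarrow> 'x::metric_space \<Rightarrow> 'x"
  assumes X: "continuous_action act X"
    and xy: "x \<in> X" "y \<in> X" "(x, y) \<notin> proximal_pairs act X"
    and lim: "(\<lambda>k. act (g k) x) \<longlonglongrightarrow> x'" "(\<lambda>k. act (g k) y) \<longlonglongrightarrow> y'"
    and x'y': "x' \<in> X" "y' \<in> X"
  shows "(x', y') \<notin> proximal_pairs act X"
proof
  assume "(x', y') \<in> proximal_pairs act X"
  have X': "\<forall>g. \<forall>x\<in>X. act g x \<in> X" "\<forall>g h. \<forall>x\<in>X. act g (act h x) = act (g + h) x"
    using X unfolding continuous_action_def by auto
  obtain \<epsilon> :: real where \<epsilon>: "\<epsilon> > 0" "\<And>h. \<epsilon> \<le> dist (act h x) (act h y)"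
    using xy unfolding proximal_pairs_def by (auto simp: not_less)
  then obtain h where h: "dist (act h x') (act h y') < \<epsilon>"
    using \<open>(x', y') \<in> proximal_pairs act X\<close> unfolding proximal_pairs_def by auto
  have act_lim: "(\<lambda>k. act h (act (g k) z)) \<longlonglongrightarrow> act h z'"
    if "z \<in> X" "(\<lambda>k. act (g k) z) \<longlonglongrightarrow> z'" "z' \<in> X" for z z'
    using continuous_on_tendsto_compose[OF continuous_on_action[OF X] that(2,3)] X'(1) that(1)
    by simp
  have "(\<lambda>k. dist (act h (act (g k) x)) (act h (act (g k) y))) \<longlonglongrightarrow> dist (act h x') (act h y')"
    using act_lim[OF xy(1) lim(1) x'y'(1)] act_lim[OF xy(2) lim(2) x'y'(2)] by (rule tendsto_dist)
  moreover have "\<epsilon> \<le> dist (act h (act (g k) x)) (act h (act (g k) y))" for k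
    using \<epsilon>(2)[of "h + g k"] X'(2) xy(1,2) by simp
  ultimately have "\<epsilon> \<le> dist (act h x') (act h y')"
    by (intro LIMSEQ_le_const) auto
  with h show False
    by simp
qed

lemma minimal_action_orbit_sequence:
  assumes "minimal_action act X" and "x \<in> X" and "x' \<in> X"
  obtains g where "(\<lambda>k. act (g k) x) \<longlonglongrightarrow> x'"
proof -
  have "x' \<in> closure (range (\<lambda>g. act g x))"
    using assms unfolding minimal_action_def by blast
  then obtain s where s: "\<forall>k. s k \<in> range (\<lambda>g. act g x)" "s \<longlonglongrightarrow> x'"
    unfolding closure_sequential by blast
  then have "\<forall>k. \<exists>h. s k = act h x"
    by blast
  then obtain g where "s = (\<lambda>k. act (g k) x)"
    by metis
  with s(2) have "(\<lambda>k. act (g k) x) \<longlonglongrightarrow> x'"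
    by simp
  then show ?thesis
    by (rule that)
qed

lemma minimal_action_move_tuple_to_fibre:
  fixes act :: "'g::topological_group_add \<Rightarrow> 'x::metric_space \<Rightarrow> 'x"
    and actE :: "'g \<Rightarrow> 'e::metric_space \<Rightarrow> 'e" and n :: nat
  assumes X: "continuous_action act X" and min: "minimal_action act X"
    and F: "factor_map act X actE E F"
    and xs: "\<forall>i<n. xs i \<in> X \<and> F (xs i) = e" and e': "e' \<in> E"
  obtains zs where "\<And>i. i < n \<Longrightarrow> zs i \<in> X \<and> F (zs i) = e'"
    and "\<And>i j. i < n \<Longrightarrow> j < n \<Longrightarrow> (xs i, xs j) \<notin> proximal_pairs act X \<Longrightarrow>
      (zs i, zs j) \<notin> proximal_pairs act X"
proof (cases "n = 0")
  case True
  then show ?thesis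
    using that by blast
next
  case False
  have X': "compact X" "\<forall>g. \<forall>x\<in>X. act g x \<in> X"
    using X unfolding continuous_action_def by auto
  have F': "continuous_on X F" "F ` X = E" "\<forall>g. \<forall>x\<in>X. F (act g x) = actE g (F x)"
    using F unfolding factor_map_def by auto
  obtain x' where x': "x' \<in> X" "F x' = e'"
    using F'(2) e' by blast
  have "xs 0 \<in> X"
    using xs False by simp
  then obtain g where g: "(\<lambda>k. act (g k) (xs 0)) \<longlonglongrightarrow> x'"
    by (rule minimal_action_orbit_sequence[OF min _ x'(1)])
  obtain r zs where r: "strict_mono r"
    and zs: "\<And>i. i < n \<Longrightarrow> zs i \<in> X \<and> ((\<lambda>k. act (g k) (xs i)) \<circ> r) \<longlonglongrightarrow> zs i"
    using seq_compact_common_subseq[OF compact_imp_seq_compact[OF X'(1)],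
        of n "\<lambda>i k. act (g k) (xs i)"] X'(2) xs by blast
  have F_lim: "(\<lambda>k. F (act (g (r k)) (xs i))) \<longlonglongrightarrow> F z"
    if "i < n" "((\<lambda>k. act (g k) (xs i)) \<circ> r) \<longlonglongrightarrow> z" "z \<in> X" for i z
    using continuous_on_tendsto_compose[OF F'(1) that(2,3)] X'(2) xs that(1)
    by (simp add: o_def)
  show ?thesis
  proof (rule that)
    fix i assume i: "i < n"
    \<comment> \<open>equivariance makes F constant on each translate of the tuple\<close>
    have "F (act (g (r k)) (xs i)) = F (act (g (r k)) (xs 0))" for k
      using F'(3) i xs False by simp
    moreover have "((\<lambda>k. act (g k) (xs 0)) \<circ> r) \<longlonglongrightarrow> x'"
      using LIMSEQ_subseq_LIMSEQ[OF g r] .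
    ultimately have "(\<lambda>k. F (act (g (r k)) (xs i))) \<longlonglongrightarrow> e'"
      using F_lim[of 0 x'] False x' by simp
    then show "zs i \<in> X \<and> F (zs i) = e'"
      using F_lim[of i "zs i"] zs[OF i] i LIMSEQ_unique by blast
  next
    fix i j assume "i < n" "j < n" "(xs i, xs j) \<notin> proximal_pairs act X"
    then show "(zs i, zs j) \<notin> proximal_pairs act X"
      using not_proximal_orbit_limit[OF X, of "xs i" "xs j" "g \<circ> r"] xs zs
      by (simp add: o_def)
  qed
qed

lemma coincidence_rank_at_le:
  assumes "\<And>n xs. \<forall>i<n. xs i \<in> X \<and> \<pi> (xs i) = y \<Longrightarrow>
      \<forall>i<n. \<forall>j<n. i \<noteq> j \<longrightarrow> (xs i, xs j) \<notin> proximal_pairs act X \<Longrightarrow> enat n \<le> r"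
  shows "coincidence_rank_at act X \<pi> y \<le> r"
  using assms unfolding coincidence_rank_at_def by (auto intro!: Sup_least)

lemma enat_le_coincidence_rank_at:
  assumes "\<forall>i<n. xs i \<in> X \<and> \<pi> (xs i) = y"
    and "\<forall>i<n. \<forall>j<n. i \<noteq> j \<longrightarrow> (xs i, xs j) \<notin> proximal_pairs act X"
  shows "enat n \<le> coincidence_rank_at act X \<pi> y"
  using assms unfolding coincidence_rank_at_def by (auto intro!: Sup_upper)

lemma enat_le_ecard:
  assumes "f ` {..<n} \<subseteq> A" and "inj_on f {..<n}"
  shows "enat n \<le> ecard A"
proof (cases "finite A")
  case True
  then have "card (f ` {..<n}) \<le> card A"
    using assms(1) by (rule card_mono)
  with True show ?thesis
    using card_image[OF assms(2)] unfolding ecard_def by simp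
qed (simp add: ecard_def)

lemma coincidence_rank_at_proximal_factor_le:
  fixes actX :: "'g::topological_group_add \<Rightarrow> 'x::metric_space \<Rightarrow> 'x"
    and actY :: "'g \<Rightarrow> 'y::metric_space \<Rightarrow> 'y"
    and actEX :: "'g \<Rightarrow> 'ex::metric_space \<Rightarrow> 'ex"
    and actEY :: "'g \<Rightarrow> 'ey::metric_space \<Rightarrow> 'ey"
  assumes X: "continuous_action actX X" and min: "minimal_action actX X"
    and \<phi>: "proximal_factor_map actX X actY Y \<phi>"
    and maxX: "max_equicontinuous_factor actX X actEX Xeq \<pi>X"
    and maxY: "max_equicontinuous_factor actY Y actEY Yeq \<pi>Y"
    and v: "v \<in> Xeq"
  shows "coincidence_rank_at actY Y \<pi>Y u \<le> coincidence_rank_at actX X \<pi>X v"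
proof (rule coincidence_rank_at_le)
  fix n and ys :: "nat \<Rightarrow> 'y"
  assume ys: "\<forall>i<n. ys i \<in> Y \<and> \<pi>Y (ys i) = u"
    and ys_np: "\<forall>i<n. \<forall>j<n. i \<noteq> j \<longrightarrow> (ys i, ys j) \<notin> proximal_pairs actY Y"
  have \<phi>': "factor_map actX X actY Y \<phi>"
    using \<phi> unfolding proximal_factor_map_def by blast
  define xs where "xs i = inv_into X \<phi> (ys i)" for i
  have xs: "\<forall>i<n. xs i \<in> X \<and> \<phi> (xs i) = ys i"
    using ys \<phi>' unfolding xs_def factor_map_def by (auto intro: inv_into_into f_inv_into_f)
  have \<pi>X: "factor_map actX X actEX Xeq \<pi>X"
    using maxX unfolding max_equicontinuous_factor_def by blast
  have xs_fibre: "\<forall>i<n. xs i \<in> X \<and> \<pi>X (xs i) = \<pi>X (xs 0)"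
    using proximal_factor_max_equicontinuous_fibres[OF X \<phi> maxX maxY] xs ys by simp
  obtain zs where zs: "\<And>i. i < n \<Longrightarrow> zs i \<in> X \<and> \<pi>X (zs i) = v"
    and zs_np: "\<And>i j. i < n \<Longrightarrow> j < n \<Longrightarrow> (xs i, xs j) \<notin> proximal_pairs actX X \<Longrightarrow>
      (zs i, zs j) \<notin> proximal_pairs actX X"
    by (rule minimal_action_move_tuple_to_fibre[OF X min \<pi>X xs_fibre v]) (rule that)
  have "(xs i, xs j) \<notin> proximal_pairs actX X" if "i < n" "j < n" "i \<noteq> j" for i j
    using factor_map_proximal_pairs[OF X \<phi>', of "xs i" "xs j"] xs ys_np that by auto
  then show "enat n \<le> coincidence_rank_at actX X \<pi>X v"
    using zs zs_np by (intro enat_le_coincidence_rank_at) auto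
qed

lemma coincidence_rank_at_le_minimal_rank_proximal_factor:
  fixes actX :: "'g::topological_group_add \<Rightarrow> 'x::metric_space \<Rightarrow> 'x"
    and actY :: "'g \<Rightarrow> 'y::metric_space \<Rightarrow> 'y"
    and actEX :: "'g \<Rightarrow> 'ex::metric_space \<Rightarrow> 'ex"
    and actEY :: "'g \<Rightarrow> 'ey::metric_space \<Rightarrow> 'ey"
  assumes X: "continuous_action actX X" and min: "minimal_action actX X"
    and \<phi>: "proximal_factor_map actX X actY Y \<phi>"
    and maxX: "max_equicontinuous_factor actX X actEX Xeq \<pi>X"
    and maxY: "max_equicontinuous_factor actY Y actEY Yeq \<pi>Y"
  shows "coincidence_rank_at actX X \<pi>X v \<le> minimal_rank Y Yeq \<pi>Y"
  unfolding minimal_rank_def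
proof (rule coincidence_rank_at_le, rule INF_greatest)
  fix n u and xs :: "nat \<Rightarrow> 'x"
  assume xs: "\<forall>i<n. xs i \<in> X \<and> \<pi>X (xs i) = v"
    and xs_np: "\<forall>i<n. \<forall>j<n. i \<noteq> j \<longrightarrow> (xs i, xs j) \<notin> proximal_pairs actX X"
    and u: "u \<in> Yeq"
  have \<phi>': "factor_map actX X actY Y \<phi>"
    and \<phi>_prox: "\<forall>x\<in>X. \<forall>x'\<in>X. \<phi> x = \<phi> x' \<longrightarrow> (x, x') \<in> proximal_pairs actX X"
    using \<phi> unfolding proximal_factor_map_def by auto
  have F: "factor_map actX X actEY Yeq (\<pi>Y \<circ> \<phi>)"
    using factor_map_compose[OF \<phi>'] maxY unfolding max_equicontinuous_factor_def by blast
  have xs_fibre: "\<forall>i<n. xs i \<in> X \<and> (\<pi>Y \<circ> \<phi>) (xs i) = (\<pi>Y \<circ> \<phi>) (xs 0)"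
  proof (intro allI impI)
    fix i assume "i < n"
    then have "xs i \<in> X" "xs 0 \<in> X" "\<pi>X (xs i) = \<pi>X (xs 0)"
      using xs by auto
    then show "xs i \<in> X \<and> (\<pi>Y \<circ> \<phi>) (xs i) = (\<pi>Y \<circ> \<phi>) (xs 0)"
      using proximal_factor_max_equicontinuous_fibres[OF X \<phi> maxX maxY] by simp
  qed
  obtain zs where zs: "\<And>i. i < n \<Longrightarrow> zs i \<in> X \<and> (\<pi>Y \<circ> \<phi>) (zs i) = u"
    and zs_np: "\<And>i j. i < n \<Longrightarrow> j < n \<Longrightarrow> (xs i, xs j) \<notin> proximal_pairs actX X \<Longrightarrow>
      (zs i, zs j) \<notin> proximal_pairs actX X"
    by (rule minimal_action_move_tuple_to_fibre[OF X min F xs_fibre u]) (rule that)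
  show "enat n \<le> ecard {y \<in> Y. \<pi>Y y = u}"
  proof (rule enat_le_ecard)
    show "(\<phi> \<circ> zs) ` {..<n} \<subseteq> {y \<in> Y. \<pi>Y y = u}"
      using zs \<phi>' unfolding factor_map_def by auto
    show "inj_on (\<phi> \<circ> zs) {..<n}"
    proof (rule inj_onI, rule ccontr)
      fix i j assume ij: "i \<in> {..<n}" "j \<in> {..<n}" "(\<phi> \<circ> zs) i = (\<phi> \<circ> zs) j" "i \<noteq> j"
      then have "zs i \<in> X" "zs j \<in> X"
        using zs by auto
      with ij \<phi>_prox have "(zs i, zs j) \<in> proximal_pairs actX X"
        by simp
      moreover have "(zs i, zs j) \<notin> proximal_pairs actX X"
        using ij zs_np xs_np by simp
      ultimately show False
        by contradiction
    qed
  qed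
qed

theorem lemma3p2:
  fixes actX :: "'g::{topological_group_add, t2_space} \<Rightarrow> 'x::metric_space \<Rightarrow> 'x"
    and actY :: "'g \<Rightarrow> 'y::metric_space \<Rightarrow> 'y"
    and actEX :: "'g \<Rightarrow> 'ex::metric_space \<Rightarrow> 'ex"
    and actEY :: "'g \<Rightarrow> 'ey::metric_space \<Rightarrow> 'ey"
    and X :: "'x set" and Y :: "'y set" and Xeq :: "'ex set" and Yeq :: "'ey set"
    and \<phi> :: "'x \<Rightarrow> 'y" and \<pi>X :: "'x \<Rightarrow> 'ex" and \<pi>Y :: "'y \<Rightarrow> 'ey"
  assumes "locally_compact_space (euclidean :: 'g topology)"
    and "continuous_action actX X" and "X \<noteq> {}" and "minimal_action actX X"
    and "continuous_action actY Y"
    and "proximal_factor_map actX X actY Y \<phi>"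
    and "max_equicontinuous_factor actX X actEX Xeq \<pi>X"
    and "max_equicontinuous_factor actY Y actEY Yeq \<pi>Y"
  shows "\<forall>u\<in>Yeq. \<forall>v\<in>Xeq.
           coincidence_rank_at actY Y \<pi>Y u \<le> coincidence_rank_at actX X \<pi>X v \<and>
           coincidence_rank_at actX X \<pi>X v \<le> minimal_rank Y Yeq \<pi>Y"
  using coincidence_rank_at_proximal_factor_le[OF assms(2,4,6,7,8)]
    coincidence_rank_at_le_minimal_rank_proximal_factor[OF assms(2,4,6,7,8)]
  by blast

end
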